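(* If the Sorgenfrey line is homeomorphic to a subspace of a Hausdorff compact space $\langle X,\tau\rangle$, then $\langle X,\tau\rangle$ is not a continuous open image of the Sorgenfrey line. In particular, the double-arrow space is not a continuous open image of the Sorgenfrey line.
   Context: The Sorgenfrey line is $\mathbb R$ with topology generated by $\{[a,b)\}$; "continuous open image" means image under a continuous open surjection. The double-arrow space is $M=\{\langle x,0\rangle:0<x\le1\}\cup\{\langle x,1\rangle:0\le x<1\}$ with the order topology of the lexicographic order. *)

theory Defs
  imports "HOL-Analysis.Analysis"
begin

definition sorgenfrey :: "real topology" where
  "sorgenfrey = topology_generated_by {{a..<b} | a b. a < b}"

definition continuous_open_image :: "'a topology \<Rightarrow> 'b topology \<Rightarrow> bool" where
  "continuous_open_image X Y \<longleftrightarrow>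
     (\<exists>f. continuous_map X Y f \<and> open_map X Y f \<and> f ` topspace X = topspace Y)"

definition lex_less :: "real \<times> nat \<Rightarrow> real \<times> nat \<Rightarrow> bool" where
  "lex_less p q \<longleftrightarrow> fst p < fst q \<or> (fst p = fst q \<and> snd p < snd q)"

definition double_arrow_set :: "(real \<times> nat) set" where
  "double_arrow_set = {(x, 0) | x. 0 < x \<and> x \<le> 1} \<union> {(x, 1) | x. 0 \<le> x \<and> x < 1}"

definition double_arrow :: "(real \<times> nat) topology" where
  "double_arrow = topology_generated_by
     ({double_arrow_set}
      \<union> {{p \<in> double_arrow_set. lex_less p a} | a. a \<in> double_arrow_set}
      \<union> {{p \<in> double_arrow_set. lex_less a p} | a. a \<in> double_arrow_set})"

end

(*
  Let f map the Sorgenfrey line continuously and openly onto a compact Hausdorff space X that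
  contains a copy e of the Sorgenfrey interval [0,1), and let Z be the preimage of the closure Y of
  the arc e[0,1).  A point of Y off the arc is a limit of e from the left at a well-defined level.
  Right continuity of f keeps f(x), for x slightly to the right of a point t of Z, away from the
  closed piece of Y that the type of f(t) excludes; measuring "slightly" by 1/n sorts the points of
  Z into countably many classes along which the arc parameter, resp. the level, is monotone.  As Z
  has no right-isolated points and closure Z - Z is countable, the Baire category theorem makes
  one class dense from the right in a short interval of Z.  For arc points this puts an open set
  meeting Y only in the arc, which compactness forbids; for gap points it puts a point of the arc
  into the closure of a later part of the arc, which the separation properties of e forbid.
*)

theory Submission
  imports Defs
begin

section \<open>The Sorgenfrey line\<close>

lemma topspace_sorgenfrey [simp]: "topspace sorgenfrey = UNIV"
proof -
  have "x \<in> \<Union>{{a..<b} | a b. a < b}" for x :: real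
  proof
    show "{x..<x + 1} \<in> {{a..<b} | a b. a < b}"
      by (rule CollectI, intro exI[of _ x] exI[of _ "x + 1"]) simp
  qed simp
  then show ?thesis
    unfolding sorgenfrey_def by auto
qed

lemma openin_sorgenfrey_atLeastLessThan: "openin sorgenfrey {a..<b}"
proof (cases "a < b")
  case True
  then show ?thesis
    unfolding sorgenfrey_def by (intro topology_generated_by_Basis) blast
qed simp

lemma openin_sorgenfrey: "openin sorgenfrey U \<longleftrightarrow> (\<forall>x\<in>U. \<exists>d>0. {x..<x + d} \<subseteq> U)"
proof
  assume "openin sorgenfrey U"
  then have "generate_topology_on {{a..<b} | a b. a < b} U"
    unfolding sorgenfrey_def by (rule openin_topology_generated_by)
  then show "\<forall>x\<in>U. \<exists>d>0. {x..<x + d} \<subseteq> U"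
  proof induction
    case (Int U V)
    show ?case
    proof
      fix x assume "x \<in> U \<inter> V"
      with Int.IH obtain d1 d2 where "d1 > 0" "{x..<x + d1} \<subseteq> U" "d2 > 0" "{x..<x + d2} \<subseteq> V"
        by blast
      then show "\<exists>d>0. {x..<x + d} \<subseteq> U \<inter> V"
        by (intro exI[of _ "min d1 d2"]) (auto simp: subset_iff)
    qed
  next
    case (UN K)
    then show ?case by blast
  next
    case (Basis s)
    then obtain a b where "s = {a..<b}" by blast
    then show ?case
      by (intro ballI, rule_tac x="b - x" in exI) auto
  qed simp
next
  assume right: "\<forall>x\<in>U. \<exists>d>0. {x..<x + d} \<subseteq> U"
  have "openin sorgenfrey (\<Union>{{a..<b} | a b. {a..<b} \<subseteq> U})"
    by (rule openin_Union) (auto simp: openin_sorgenfrey_atLeastLessThan)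
  moreover have "U \<subseteq> \<Union>{{a..<b} | a b. {a..<b} \<subseteq> U}"
  proof
    fix x assume "x \<in> U"
    with right obtain d where "d > 0" "{x..<x + d} \<subseteq> U"
      by blast
    then show "x \<in> \<Union>{{a..<b} | a b. {a..<b} \<subseteq> U}"
      by (intro UnionI[of "{x..<x + d}"]) auto
  qed
  then have "U = \<Union>{{a..<b} | a b. {a..<b} \<subseteq> U}"
    by blast
  ultimately show "openin sorgenfrey U"
    by simp
qed

lemma openin_sorgenfrey_atLeast: "openin sorgenfrey {a..}"
  unfolding openin_sorgenfrey by (intro ballI exI[of _ 1]) auto

lemma openin_sorgenfrey_lessThan: "openin sorgenfrey {..<a}"
  unfolding openin_sorgenfrey by (intro ballI, rule_tac x="a - x" in exI) auto

lemma openin_sorgenfrey_greaterThanLessThan: "openin sorgenfrey {a<..<b}"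
  unfolding openin_sorgenfrey by (intro ballI, rule_tac x="b - x" in exI) auto

lemma continuous_map_sorgenfrey_right:
  assumes "continuous_map (subtopology sorgenfrey S) X f" "t \<in> S" "openin X W" "f t \<in> W"
  obtains d where "d > 0" "\<And>x. x \<in> S \<Longrightarrow> t \<le> x \<Longrightarrow> x < t + d \<Longrightarrow> f x \<in> W"
proof -
  have "openin (subtopology sorgenfrey S) {x \<in> S. f x \<in> W}"
    using assms(1,3) by (simp add: continuous_map_def)
  then obtain T where T: "openin sorgenfrey T" "{x \<in> S. f x \<in> W} = T \<inter> S"
    by (auto simp: openin_subtopology)
  then have "t \<in> T"
    using assms(2,4) by blast
  with T(1) obtain d where "d > 0" "{t..<t + d} \<subseteq> T"
    unfolding openin_sorgenfrey by blast
  show ?thesis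
  proof (rule that[OF \<open>d > 0\<close>])
    fix x assume "x \<in> S" "t \<le> x" "x < t + d"
    with \<open>{t..<t + d} \<subseteq> T\<close> have "x \<in> T \<inter> S"
      by auto
    with T(2) show "f x \<in> W"
      by blast
  qed
qed

lemma continuous_map_sorgenfrey_right_UNIV:
  assumes "continuous_map sorgenfrey X f" "openin X W" "f t \<in> W"
  obtains d where "d > 0" "\<And>x. t \<le> x \<Longrightarrow> x < t + d \<Longrightarrow> f x \<in> W"
  using continuous_map_sorgenfrey_right[of UNIV X f t W] assms by (metis UNIV_I subtopology_UNIV)

section \<open>Category arguments on the real line\<close>

lemma nat_reciprocal_less:
  assumes "0 < (d::real)"
  obtains n :: nat where "0 < n" "1 / real n < d"
  using ex_inverse_of_nat_less[OF assms] by (metis inverse_eq_divide)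

lemma finite_common_witness_below:
  fixes c :: real
  assumes "finite F" "\<And>V. V \<in> F \<Longrightarrow> \<exists>a<c. P V a" "\<And>V a a'. P V a \<Longrightarrow> a \<le> a' \<Longrightarrow> P V a'"
  shows "\<exists>a<c. \<forall>V\<in>F. P V a"
  using assms(1,2)
proof (induction F rule: finite_induct)
  case empty
  show ?case
    by (intro exI[of _ "c - 1"]) simp
next
  case (insert V F)
  then obtain a1 a2 where "a1 < c" "\<forall>W\<in>F. P W a1" "a2 < c" "P V a2"
    by (metis insertCI)
  then have "\<forall>W\<in>insert V F. P W (max a1 a2)"
    using assms(3)[of _ a1 "max a1 a2"] assms(3)[of V a2 "max a1 a2"] by simp
  moreover have "max a1 a2 < c"
    using \<open>a1 < c\<close> \<open>a2 < c\<close> by simp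
  ultimately show ?case
    by blast
qed

lemma countable_right_gaps:
  fixes S :: "real set"
  shows "countable {x \<in> closure S. \<exists>d>0. {x..<x + d} \<inter> S = {}}" (is "countable ?N")
proof -
  have "\<forall>x\<in>?N. \<exists>d. d > 0 \<and> {x..<x + d} \<inter> S = {}"
    by blast
  from bchoice[OF this] obtain d where d: "\<And>x. x \<in> ?N \<Longrightarrow> d x > 0 \<and> {x..<x + d x} \<inter> S = {}"
    by blast
  have sep: "x + d x \<le> x'" if x: "x \<in> ?N" and x': "x' \<in> ?N" "x < x'" for x x'
  proof (rule ccontr)
    assume "\<not> x + d x \<le> x'"
    moreover have "0 < min (x' - x) (d x')"
      using d[OF x'(1)] x'(2) by simp
    then obtain z where "z \<in> S" "dist z x' < min (x' - x) (d x')"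
      using x'(1) unfolding closure_approachable by blast
    ultimately have "z \<in> {x..<x + d x} \<or> z \<in> {x'..<x' + d x'}"
      by (auto simp: dist_real_def abs_less_iff)
    with \<open>z \<in> S\<close> d[OF x] d[OF x'(1)] show False
      by blast
  qed
  have "\<forall>x\<in>?N. \<exists>r. r \<in> \<rat> \<and> x < r \<and> r < x + d x"
    using Rats_dense_in_real d by (simp add: Bex_def)
  from bchoice[OF this] obtain q where q: "\<And>x. x \<in> ?N \<Longrightarrow> q x \<in> \<rat> \<and> x < q x \<and> q x < x + d x"
    by blast
  have "strict_mono_on ?N q"
  proof (rule strict_mono_onI)
    fix x x' assume "x \<in> ?N" "x' \<in> ?N" "x < x'"
    then have "q x < x + d x" "x + d x \<le> x'" "x' < q x'"
      using q sep by blast+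
    then show "q x < q x'"
      by linarith
  qed
  then have "inj_on q ?N"
    by (rule strict_mono_on_imp_inj_on)
  moreover have "q ` ?N \<subseteq> \<rat>"
    using q by blast
  then have "countable (q ` ?N)"
    using countable_rat by (rule countable_subset)
  ultimately show ?thesis
    by (rule countable_image_inj_on[rotated])
qed

lemma Baire_countable_cover:
  fixes S :: "'a::{real_normed_vector,heine_borel} set"
  assumes "closed S" "S \<noteq> {}" "countable \<A>" "S \<subseteq> \<Union>\<A>"
  obtains A w \<epsilon> where "A \<in> \<A>" "w \<in> S" "\<epsilon> > 0" "S \<inter> ball w \<epsilon> \<subseteq> closure A"
proof -
  define \<G> where "\<G> = (\<lambda>A. S \<inter> - closure A) ` \<A>"
  have "countable \<G>"
    unfolding \<G>_def using \<open>countable \<A>\<close> by simp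
  have "\<exists>T\<in>\<G>. \<not> S \<subseteq> closure T"
  proof (rule ccontr)
    assume "\<not> (\<exists>T\<in>\<G>. \<not> S \<subseteq> closure T)"
    moreover have "openin (top_of_set S) T" if "T \<in> \<G>" for T
      using that unfolding \<G>_def by (auto intro: openin_open_Int)
    ultimately have "S \<subseteq> closure (\<Inter>\<G>)"
      by (intro Baire[OF \<open>closed S\<close> \<open>countable \<G>\<close>]) blast
    with \<open>S \<noteq> {}\<close> have "\<Inter>\<G> \<noteq> {}"
      by (metis closure_empty subset_empty)
    then obtain w where "w \<in> \<Inter>\<G>"
      by blast
    then have w: "w \<in> S \<and> w \<notin> closure A" if "A \<in> \<A>" for A
      using that unfolding \<G>_def by blast
    from \<open>S \<noteq> {}\<close> \<open>S \<subseteq> \<Union>\<A>\<close> obtain A0 where "A0 \<in> \<A>"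
      by blast
    with w \<open>S \<subseteq> \<Union>\<A>\<close> obtain A where "A \<in> \<A>" "w \<in> A"
      by blast
    with w show False
      using closure_subset by blast
  qed
  then obtain A w where "A \<in> \<A>" "w \<in> S" "w \<notin> closure (S \<inter> - closure A)"
    unfolding \<G>_def by blast
  moreover from this obtain \<epsilon> where "\<epsilon> > 0" "\<forall>y\<in>S \<inter> - closure A. \<epsilon> \<le> dist y w"
    unfolding closure_approachable by (auto simp: not_less)
  moreover have "S \<inter> ball w \<epsilon> \<subseteq> closure A"
  proof
    fix y assume y: "y \<in> S \<inter> ball w \<epsilon>"
    show "y \<in> closure A"
    proof (rule ccontr)
      assume "y \<notin> closure A"
      with y calculation(5) have "\<epsilon> \<le> dist y w"
        by blast
      with y show False
        by (simp add: dist_commute)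
    qed
  qed
  ultimately show ?thesis
    using that by blast
qed

definition right_dense_in :: "real set \<Rightarrow> real set \<Rightarrow> real \<Rightarrow> real \<Rightarrow> bool" where
  "right_dense_in A Z a b \<longleftrightarrow>
     (\<forall>u\<in>Z. a < u \<longrightarrow> u < b \<longrightarrow> (\<forall>\<eta>>0. \<exists>p\<in>A. u < p \<and> p < u + \<eta> \<and> p < b))"

lemma right_dense_inD:
  "right_dense_in A Z a b \<Longrightarrow> u \<in> Z \<Longrightarrow> a < u \<Longrightarrow> u < b \<Longrightarrow> 0 < \<eta> \<Longrightarrow>
    \<exists>p\<in>A. u < p \<and> p < u + \<eta> \<and> p < b"
  by (simp add: right_dense_in_def)

lemma right_dense_in_small_interval:
  fixes A Z :: "real set"
  assumes no_right_isolated: "\<And>t d. t \<in> Z \<Longrightarrow> 0 < d \<Longrightarrow> \<exists>x\<in>Z. t < x \<and> x < t + d"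
    and w: "w \<in> closure Z" and "0 < \<epsilon>" and dense: "closure Z \<inter> ball w \<epsilon> \<subseteq> closure A"
    and "0 < \<delta>"
  obtains a b z where "z \<in> Z" "a < z" "z < b" "b - a < \<delta>" "right_dense_in A Z a b"
proof -
  obtain z where z: "z \<in> Z" "dist z w < \<epsilon> / 2"
    using w \<open>0 < \<epsilon>\<close> unfolding closure_approachable by (meson half_gt_zero)
  define \<rho> where "\<rho> = min (\<epsilon> / 4) (\<delta> / 4)"
  have \<rho>: "0 < \<rho>" "\<rho> \<le> \<epsilon> / 4" "\<rho> < \<delta> / 2"
    using \<open>0 < \<epsilon>\<close> \<open>0 < \<delta>\<close> unfolding \<rho>_def by auto
  have "right_dense_in A Z (z - \<rho>) (z + \<rho>)"
    unfolding right_dense_in_def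
  proof (intro ballI impI allI)
    fix u \<eta> :: real assume "u \<in> Z" "z - \<rho> < u" "u < z + \<rho>" "0 < \<eta>"
    define m where "m = min \<eta> (z + \<rho> - u)"
    have "0 < m"
      using \<open>0 < \<eta>\<close> \<open>u < z + \<rho>\<close> by (simp add: m_def)
    then obtain z' where z': "z' \<in> Z" "u < z'" "z' < u + m"
      using no_right_isolated[OF \<open>u \<in> Z\<close>] by blast
    have "dist z' z < \<rho>"
      using z' \<open>z - \<rho> < u\<close> unfolding m_def dist_real_def by auto
    then have "dist w z' < \<epsilon>"
      using z(2) \<rho>(2) unfolding dist_real_def by arith
    with z'(1) have "z' \<in> closure Z \<inter> ball w \<epsilon>"
      using closure_subset by auto
    with dense have "z' \<in> closure A"
      by blast
    moreover have "0 < min (z' - u) (u + m - z')"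
      using z' by simp
    ultimately obtain p where "p \<in> A" "dist p z' < min (z' - u) (u + m - z')"
      unfolding closure_approachable by blast
    then show "\<exists>p\<in>A. u < p \<and> p < u + \<eta> \<and> p < z + \<rho>"
      unfolding m_def by (intro bexI[of _ p]) (auto simp: dist_real_def abs_less_iff)
  qed
  with z(1) \<rho> show ?thesis
    using that[of z "z - \<rho>" "z + \<rho>"] by simp
qed

section \<open>Open images of the Sorgenfrey line containing a Sorgenfrey arc\<close>

lemma notin_closure_ofI:
  assumes "openin X T" "y \<in> T" "T \<inter> S = {}"
  shows "y \<notin> X closure_of S"
  using assms by (auto simp: in_closure_of)

text \<open>A weakening of "e embeds the Sorgenfrey interval [0,1)" that is all the argument needs.
  Embeddings of the Sorgenfrey line and the map r \<mapsto> \<langle>r,1\<rangle> into the double arrow both qualify.\<close>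

definition sorgenfrey_arc :: "'a topology \<Rightarrow> (real \<Rightarrow> 'a) \<Rightarrow> bool" where
  "sorgenfrey_arc X e \<longleftrightarrow>
     continuous_map (subtopology sorgenfrey {0..<1}) X e \<and>
     (\<forall>r\<in>{0..<1}. e r \<notin> X closure_of (e ` {0..<r})) \<and>
     (\<forall>r\<in>{0..<1}. \<forall>s>r. e r \<notin> X closure_of (e ` {s..<1}))"

locale sorgenfrey_open_image =
  fixes X :: "'a topology" and f e :: "real \<Rightarrow> 'a"
  assumes compact: "compact_space X" and Hausdorff: "Hausdorff_space X"
    and f_continuous: "continuous_map sorgenfrey X f" and f_open: "open_map sorgenfrey X f"
    and f_surj: "range f = topspace X"
    and e_sorgenfrey_arc: "sorgenfrey_arc X e"
begin

lemma e_continuous: "continuous_map (subtopology sorgenfrey {0..<1}) X e"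
  using e_sorgenfrey_arc by (simp add: sorgenfrey_arc_def)

lemma e_in_topspace: "r \<in> {0..<1} \<Longrightarrow> e r \<in> topspace X"
  using continuous_map_image_subset_topspace[OF e_continuous] by auto

lemma f_in_topspace: "f t \<in> topspace X"
  using f_surj by auto

lemma openin_f_image: "openin sorgenfrey U \<Longrightarrow> openin X (f ` U)"
  using f_open by (simp add: open_map_def)

lemma separate_points:
  assumes "x \<in> topspace X" "y \<in> topspace X" "x \<noteq> y"
  obtains U V where "openin X U" "openin X V" "x \<in> U" "y \<in> V" "U \<inter> V = {}"
proof -
  have "\<exists>U V. openin X U \<and> openin X V \<and> x \<in> U \<and> y \<in> V \<and> disjnt U V"
    using Hausdorff assms unfolding Hausdorff_space_def by blast
  then show ?thesis
    using that unfolding disjnt_def by blast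
qed

lemma f_avoids_closed:
  assumes "closedin X K" "f t \<notin> K"
  obtains d where "d > 0" "\<And>x. t \<le> x \<Longrightarrow> x < t + d \<Longrightarrow> f x \<notin> K"
proof -
  have "openin X (topspace X - K)" "f t \<in> topspace X - K"
    using assms f_in_topspace by (auto simp: openin_diff)
  then obtain d where "d > 0" "\<And>x. t \<le> x \<Longrightarrow> x < t + d \<Longrightarrow> f x \<in> topspace X - K"
    using continuous_map_sorgenfrey_right_UNIV[OF f_continuous] by metis
  then show ?thesis
    using that by blast
qed

definition arc_image :: "'a set" where
  "arc_image = e ` {0..<1}"

definition arc_segment :: "real \<Rightarrow> real \<Rightarrow> 'a set" where
  "arc_segment a b = X closure_of (e ` ({a..<b} \<inter> {0..<1}))"

definition arc_closure :: "'a set" where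
  "arc_closure = X closure_of arc_image"

definition arc_preimage :: "real set" where
  "arc_preimage = f -` arc_closure"

lemma closedin_arc_segment: "closedin X (arc_segment a b)"
  by (simp add: arc_segment_def)

lemma closedin_arc_closure: "closedin X arc_closure"
  by (simp add: arc_closure_def)

lemma arc_segment_mono: "a' \<le> a \<Longrightarrow> b \<le> b' \<Longrightarrow> arc_segment a b \<subseteq> arc_segment a' b'"
  unfolding arc_segment_def by (intro closure_of_mono image_mono) auto

lemma arc_segment_split: "arc_segment a b \<subseteq> arc_segment a c \<union> arc_segment c b"
proof -
  have "{a..<b} \<inter> {0..<1} \<subseteq> ({a..<c} \<inter> {0..<1}) \<union> ({c..<b} \<inter> {0..<1})"
    by auto
  then have "e ` ({a..<b} \<inter> {0..<1}) \<subseteq> e ` ({a..<c} \<inter> {0..<1}) \<union> e ` ({c..<b} \<inter> {0..<1})"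
    unfolding image_Un[symmetric] by (rule image_mono)
  then show ?thesis
    unfolding arc_segment_def closure_of_Un[symmetric] by (rule closure_of_mono)
qed

lemma arc_segment_empty:
  assumes "b \<le> a \<or> b \<le> 0 \<or> 1 \<le> a"
  shows "arc_segment a b = {}"
proof -
  have "{a..<b} \<inter> {0..<1} = {}"
    using assms by auto
  then show ?thesis
    unfolding arc_segment_def by (simp only: image_empty closure_of_empty)
qed

lemma e_in_arc_segment: "r \<in> {a..<b} \<Longrightarrow> r \<in> {0..<1} \<Longrightarrow> e r \<in> arc_segment a b"
  unfolding arc_segment_def
  by (rule subsetD[OF closure_of_subset]) (use e_in_topspace in auto)

lemma arc_image_subset_arc_closure: "arc_image \<subseteq> arc_closure"
  unfolding arc_closure_def arc_image_def by (rule closure_of_subset) (use e_in_topspace in auto)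

lemma arc_segment_0_1: "arc_segment 0 1 = arc_closure"
  by (simp add: arc_segment_def arc_closure_def arc_image_def)

lemma e_notin_arc_segment_left: "r \<in> {0..<1} \<Longrightarrow> e r \<notin> arc_segment a r"
proof -
  assume r: "r \<in> {0..<1}"
  have "arc_segment a r \<subseteq> X closure_of (e ` {0..<r})"
    unfolding arc_segment_def by (intro closure_of_mono image_mono) auto
  with r e_sorgenfrey_arc show ?thesis
    unfolding sorgenfrey_arc_def by blast
qed

lemma e_notin_arc_segment_right: "r \<in> {0..<1} \<Longrightarrow> r < s \<Longrightarrow> e r \<notin> arc_segment s b"
proof -
  assume r: "r \<in> {0..<1}" "r < s"
  have "arc_segment s b \<subseteq> X closure_of (e ` {s..<1})"
    unfolding arc_segment_def by (intro closure_of_mono image_mono) auto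
  with r e_sorgenfrey_arc show ?thesis
    unfolding sorgenfrey_arc_def by blast
qed

lemma inj_on_e: "inj_on e {0..<1}"
proof (rule linorder_inj_onI)
  fix r s :: real assume "r < s" "r \<in> {0..<1}" "s \<in> {0..<1}"
  then have "e s \<in> arc_segment s 1" "e r \<notin> arc_segment s 1"
    by (simp_all add: e_in_arc_segment e_notin_arc_segment_right)
  then show "e r \<noteq> e s"
    by metis
qed auto

lemma notin_arc_segment_right_of:
  assumes "y \<in> topspace X" "l \<in> {0..<1}" "y \<noteq> e l"
  obtains d where "d > 0" "y \<notin> arc_segment l (l + d)"
proof -
  obtain U V where UV: "openin X U" "openin X V" "y \<in> U" "e l \<in> V" "U \<inter> V = {}"
    using separate_points[OF assms(1) e_in_topspace[OF assms(2)] assms(3)] by blast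
  obtain d where "d > 0" "\<And>x. x \<in> {0..<1} \<Longrightarrow> l \<le> x \<Longrightarrow> x < l + d \<Longrightarrow> e x \<in> V"
    using continuous_map_sorgenfrey_right[OF e_continuous assms(2) UV(2,4)] by blast
  then have "U \<inter> e ` ({l..<l + d} \<inter> {0..<1}) = {}"
    using UV(5) by auto
  then have "y \<notin> arc_segment l (l + d)"
    unfolding arc_segment_def by (rule notin_closure_ofI[OF UV(1,3)])
  with \<open>d > 0\<close> show ?thesis
    using that by blast
qed

lemma arc_closure_subset_topspace: "arc_closure \<subseteq> topspace X"
  by (simp add: arc_closure_def closure_of_subset_topspace)

lemma in_arc_segment_from_right:
  assumes "y \<in> topspace X" "y \<notin> arc_image" "l \<in> {0..<1}"
    and above: "\<And>r. l < r \<Longrightarrow> y \<in> arc_segment 0 r"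
  shows "y \<in> arc_segment 0 l"
proof -
  have "y \<noteq> e l"
    using assms(2,3) by (auto simp: arc_image_def)
  then obtain d where "d > 0" "y \<notin> arc_segment l (l + d)"
    using notin_arc_segment_right_of assms(1,3) by blast
  moreover have "y \<in> arc_segment 0 (l + d)"
    using above \<open>d > 0\<close> by simp
  ultimately show ?thesis
    using arc_segment_split[of 0 "l + d" l] by blast
qed

text \<open>A point of the closure of the arc that is not on it is approached by e from the left only:
  it lies in the closure of e[0,l) for its level l, but not in the closure of any shorter initial
  piece.\<close>

definition gap_level :: "'a \<Rightarrow> real \<Rightarrow> bool" where
  "gap_level y l \<longleftrightarrow>
     y \<notin> arc_image \<and> 0 < l \<and> l \<le> 1 \<and> y \<in> arc_segment 0 l \<and> (\<forall>l'<l. y \<notin> arc_segment 0 l')"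

lemma arc_closure_cases:
  assumes y: "y \<in> arc_closure" "y \<notin> arc_image"
  obtains l where "gap_level y l"
proof -
  define S where "S = {r. y \<in> arc_segment 0 r}"
  have "1 \<in> S"
    using y(1) by (simp add: S_def arc_segment_0_1)
  have pos: "0 < r" if "r \<in> S" for r
  proof (rule ccontr)
    assume "\<not> 0 < r"
    then have "arc_segment 0 r = {}"
      by (intro arc_segment_empty) simp
    with that show False
      by (simp add: S_def)
  qed
  then have bdd: "bdd_below S"
    by (intro bdd_below.I[of _ 0]) (simp add: less_imp_le)
  define l where "l = Inf S"
  have "l \<le> 1"
    unfolding l_def by (rule cInf_lower[OF \<open>1 \<in> S\<close> bdd])
  have "0 \<le> l"
    unfolding l_def using \<open>1 \<in> S\<close> pos by (intro cInf_greatest) (auto simp: less_imp_le)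
  have below: "y \<notin> arc_segment 0 r" if "r < l" for r
  proof
    assume "y \<in> arc_segment 0 r"
    then have "l \<le> r"
      unfolding l_def by (intro cInf_lower[OF _ bdd]) (simp add: S_def)
    with that show False
      by simp
  qed
  have above: "y \<in> arc_segment 0 r" if "l < r" for r
  proof -
    obtain r' where "r' \<in> S" "r' < r"
      using cInf_lessD[of S r] \<open>l < r\<close> \<open>1 \<in> S\<close> unfolding l_def by blast
    then show ?thesis
      using arc_segment_mono[of 0 0 r' r] by (auto simp: S_def)
  qed
  have "y \<in> arc_segment 0 l"
  proof (cases "l = 1")
    case True
    with \<open>1 \<in> S\<close> show ?thesis
      by (simp add: S_def)
  next
    case False
    with \<open>0 \<le> l\<close> \<open>l \<le> 1\<close> have "l \<in> {0..<1}"
      by simp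
    moreover have "y \<in> topspace X"
      using y(1) arc_closure_subset_topspace by blast
    ultimately show ?thesis
      using in_arc_segment_from_right y(2) above by blast
  qed
  moreover from this have "0 < l"
    using pos unfolding S_def by blast
  ultimately have "gap_level y l"
    using y(2) \<open>l \<le> 1\<close> below unfolding gap_level_def by blast
  then show ?thesis
    by (rule that)
qed

text \<open>Every point of the preimage of the arc closure has one of countably many types, indexed by a
  scale n and, for gap points, by the window k/n \<le> l < (k+1)/n of the level.  The defining property
  persists for 1/n to the right, which makes the witnesses r and l monotone along each type.\<close>

definition arc_type :: "nat \<Rightarrow> real \<Rightarrow> real \<Rightarrow> bool" where
  "arc_type n t r \<longleftrightarrow>
     0 < n \<and> r \<in> {0..<1} \<and> f t = e r \<and> (\<forall>x\<in>{t..<t + 1 / real n}. f x \<notin> arc_segment 0 r)"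

definition gap_type :: "nat \<Rightarrow> nat \<Rightarrow> real \<Rightarrow> real \<Rightarrow> bool" where
  "gap_type n k t l \<longleftrightarrow>
     0 < n \<and> gap_level (f t) l \<and> real k \<le> l * real n \<and> l * real n < real k + 1 \<and>
     (\<forall>x\<in>{t..<t + 1 / real n}. f x \<notin> arc_segment l (l + 1 / real n))"

lemma arc_type_exists:
  assumes "r \<in> {0..<1}" "f t = e r"
  obtains n where "arc_type n t r"
proof -
  have "f t \<notin> arc_segment 0 r"
    using assms e_notin_arc_segment_left by simp
  then obtain d where "d > 0" and d: "\<And>x. t \<le> x \<Longrightarrow> x < t + d \<Longrightarrow> f x \<notin> arc_segment 0 r"
    using f_avoids_closed[OF closedin_arc_segment] by blast
  obtain n where "0 < n" "1 / real n < d"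
    using nat_reciprocal_less[OF \<open>d > 0\<close>] by blast
  then have "arc_type n t r"
    using assms d unfolding arc_type_def by auto
  then show ?thesis
    by (rule that)
qed

lemma gap_type_exists:
  assumes gap: "gap_level (f t) l"
  obtains n k where "gap_type n k t l"
proof -
  obtain d0 where "d0 > 0" "f t \<notin> arc_segment l (l + d0)"
  proof (cases "l < 1")
    case True
    with gap have "l \<in> {0..<1}" "f t \<noteq> e l"
      by (auto simp: gap_level_def arc_image_def)
    then show ?thesis
      using notin_arc_segment_right_of[OF f_in_topspace] that by blast
  next
    case False
    then have "arc_segment l (l + 1) = {}"
      by (intro arc_segment_empty) simp
    then show ?thesis
      using that[of 1] by simp
  qed
  then obtain d where "d > 0" and d: "\<And>x. t \<le> x \<Longrightarrow> x < t + d \<Longrightarrow> f x \<notin> arc_segment l (l + d0)"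
    using f_avoids_closed[OF closedin_arc_segment] by blast
  obtain n where "0 < n" "1 / real n < min d d0"
    using nat_reciprocal_less \<open>d > 0\<close> \<open>d0 > 0\<close> by (metis min_less_iff_conj)
  define k where "k = nat \<lfloor>l * real n\<rfloor>"
  have "0 \<le> l * real n"
    using gap by (simp add: gap_level_def)
  then have "real k \<le> l * real n" "l * real n < real k + 1"
    unfolding k_def by linarith+
  moreover have "arc_segment l (l + 1 / real n) \<subseteq> arc_segment l (l + d0)"
    using \<open>1 / real n < min d d0\<close> by (intro arc_segment_mono) auto
  ultimately have "gap_type n k t l"
    using \<open>0 < n\<close> \<open>1 / real n < min d d0\<close> gap d unfolding gap_type_def by fastforce
  then show ?thesis
    by (rule that)
qed

lemma arc_preimage_cases:
  assumes "t \<in> arc_preimage"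
  shows "(\<exists>n r. arc_type n t r) \<or> (\<exists>n k l. gap_type n k t l)"
proof (cases "f t \<in> arc_image")
  case True
  then obtain r where "r \<in> {0..<1}" "f t = e r"
    by (auto simp: arc_image_def)
  then show ?thesis
    using arc_type_exists by metis
next
  case False
  have "f t \<in> arc_closure"
    using assms by (simp add: arc_preimage_def)
  then obtain l where "gap_level (f t) l"
    using False by (rule arc_closure_cases)
  then show ?thesis
    using gap_type_exists by metis
qed

lemma arc_type_mono:
  assumes "arc_type n t r" "arc_type n t' r'" "t \<le> t'" "t' < t + 1 / real n"
  shows "r \<le> r'"
proof (rule ccontr)
  assume "\<not> r \<le> r'"
  with assms(2) have "e r' \<in> arc_segment 0 r"
    by (intro e_in_arc_segment) (auto simp: arc_type_def)
  moreover have "f t' \<notin> arc_segment 0 r"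
    using assms(1,3,4) by (auto simp: arc_type_def)
  ultimately show False
    using assms(2) by (simp add: arc_type_def)
qed

lemma gap_type_antimono:
  assumes u: "gap_type n k u l" and u': "gap_type n k u' l'" and "u \<le> u'" "u' < u + 1 / real n"
  shows "l' \<le> l"
proof (rule ccontr)
  assume "\<not> l' \<le> l"
  have "0 < n" "real k \<le> l * real n" "l' * real n < real k + 1"
    using u u' by (auto simp: gap_type_def)
  then have "l' < l + 1 / real n"
    by (simp add: field_simps)
  have "f u' \<in> arc_segment 0 l'" "f u' \<notin> arc_segment 0 l"
    using u' \<open>\<not> l' \<le> l\<close> by (auto simp: gap_type_def gap_level_def)
  then have "f u' \<in> arc_segment l l'"
    using arc_segment_split[of 0 l' l] by blast
  also have "\<dots> \<subseteq> arc_segment l (l + 1 / real n)"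
    using \<open>l' < l + 1 / real n\<close> by (intro arc_segment_mono) auto
  finally show False
    using u \<open>u \<le> u'\<close> \<open>u' < u + 1 / real n\<close> by (auto simp: gap_type_def)
qed

lemma arc_closure_no_isolated:
  assumes "y \<in> arc_closure" "openin X W" "y \<in> W"
  obtains y' where "y' \<in> W" "y' \<in> arc_closure" "y' \<noteq> y"
proof (cases "y \<in> arc_image")
  case True
  then obtain s where s: "s \<in> {0..<1}" "y = e s"
    by (auto simp: arc_image_def)
  with assms(3) have "e s \<in> W"
    by simp
  then obtain d where "d > 0" and d: "\<And>x. x \<in> {0..<1} \<Longrightarrow> s \<le> x \<Longrightarrow> x < s + d \<Longrightarrow> e x \<in> W"
    using continuous_map_sorgenfrey_right[OF e_continuous s(1) assms(2)] by blast
  define m where "m = min d (1 - s)"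
  define x where "x = s + m / 2"
  have "m > 0" "m \<le> d" "m \<le> 1 - s"
    using s \<open>d > 0\<close> by (auto simp: m_def)
  then have "x \<in> {0..<1}" "s < x" "x < s + d"
    using s unfolding x_def by auto
  then have "e x \<in> W"
    using d by simp
  moreover have "e x \<in> arc_closure"
    using \<open>x \<in> {0..<1}\<close> by (intro subsetD[OF arc_image_subset_arc_closure]) (simp add: arc_image_def)
  moreover have "e x \<noteq> y"
    unfolding s(2)
  proof
    assume "e x = e s"
    have "x = s"
      by (rule inj_onD[OF inj_on_e \<open>e x = e s\<close> \<open>x \<in> {0..<1}\<close> s(1)])
    with \<open>s < x\<close> show False
      by simp
  qed
  ultimately show ?thesis
    by (rule that)
next
  case False
  from assms obtain y' where "y' \<in> arc_image" "y' \<in> W"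
    unfolding arc_closure_def in_closure_of by blast
  moreover from this False have "y' \<noteq> y"
    by blast
  ultimately show ?thesis
    using arc_image_subset_arc_closure that by blast
qed

lemma arc_preimage_no_right_isolated:
  assumes "t \<in> arc_preimage" "0 < d"
  shows "\<exists>x\<in>arc_preimage. t < x \<and> x < t + d"
proof -
  define W where "W = f ` {t..<t + d}"
  have "openin X W"
    unfolding W_def by (rule openin_f_image[OF openin_sorgenfrey_atLeastLessThan])
  have "f t \<in> W"
    unfolding W_def using \<open>0 < d\<close> by (intro imageI) simp
  have "f t \<in> arc_closure"
    using assms(1) by (simp add: arc_preimage_def)
  then obtain y where y: "y \<in> W" "y \<in> arc_closure" "y \<noteq> f t"
    using \<open>openin X W\<close> \<open>f t \<in> W\<close> by (rule arc_closure_no_isolated)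
  then obtain x where x: "x \<in> {t..<t + d}" "y = f x"
    unfolding W_def by blast
  with y have "x \<noteq> t" "x \<in> arc_preimage"
    by (auto simp: arc_preimage_def)
  with x(1) show ?thesis
    by (intro bexI[of _ x]) auto
qed

lemma arc_image_meets_image_of_interval:
  assumes "z \<in> arc_preimage" "a < z" "z < b"
  obtains x where "a < x" "x < b" "f x \<in> arc_image"
proof -
  have "openin X (f ` {a<..<b})"
    by (simp add: openin_f_image openin_sorgenfrey_greaterThanLessThan)
  moreover have "f z \<in> f ` {a<..<b}"
    using assms(2,3) by simp
  moreover have "f z \<in> X closure_of arc_image"
    using assms(1) by (simp add: arc_preimage_def arc_closure_def)
  ultimately obtain y where "y \<in> arc_image" "y \<in> f ` {a<..<b}"
    unfolding in_closure_of by blast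
  then obtain x where "x \<in> {a<..<b}" "f x \<in> arc_image"
    by blast
  then show ?thesis
    using that by auto
qed

lemma arc_image_point_misses_left_of:
  assumes "y \<in> arc_image" "0 < c" "c \<le> 1"
  obtains V a where "openin X V" "y \<in> V" "a < c" "V \<inter> e ` {a..<c} = {}"
proof -
  obtain s where s: "s \<in> {0..<1}" "y = e s"
    using assms(1) by (auto simp: arc_image_def)
  show ?thesis
  proof (cases "c \<le> s")
    case True
    have "openin X (topspace X - arc_segment 0 s)"
      by (simp add: openin_diff closedin_arc_segment)
    moreover have "y \<in> topspace X - arc_segment 0 s"
      using s e_in_topspace e_notin_arc_segment_left by simp
    moreover have "c / 2 < c"
      using \<open>0 < c\<close> by simp
    moreover have "e x \<in> arc_segment 0 s" if "x \<in> {c / 2..<c}" for x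
      using that True \<open>0 < c\<close> \<open>c \<le> 1\<close> by (intro e_in_arc_segment) auto
    then have "(topspace X - arc_segment 0 s) \<inter> e ` {c / 2..<c} = {}"
      by blast
    ultimately show ?thesis
      by (rule that)
  next
    case False
    define s' where "s' = (s + c) / 2"
    have "s < s'" "s' < c" "0 \<le> s'"
      using False s(1) unfolding s'_def by auto
    have "openin X (topspace X - arc_segment s' 1)"
      by (simp add: openin_diff closedin_arc_segment)
    moreover have "y \<in> topspace X - arc_segment s' 1"
      using s e_in_topspace e_notin_arc_segment_right \<open>s < s'\<close> by simp
    moreover note \<open>s' < c\<close>
    moreover have "e x \<in> arc_segment s' 1" if "x \<in> {s'..<c}" for x
      using that \<open>0 \<le> s'\<close> \<open>c \<le> 1\<close> by (intro e_in_arc_segment) auto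
    then have "(topspace X - arc_segment s' 1) \<inter> e ` {s'..<c} = {}"
      by blast
    ultimately show ?thesis
      by (rule that)
  qed
qed

lemma compact_subset_arc_image_misses_left_of:
  assumes K: "compactin X K" "K \<subseteq> arc_image" and "0 < c" "c \<le> 1"
  obtains a where "a < c" "K \<inter> e ` {a..<c} = {}"
proof -
  define misses where "misses V a \<longleftrightarrow> V \<inter> e ` {a..<c} = {}" for V a
  have misses_mono: "misses V a'" if "misses V a" "a \<le> a'" for V a a'
    using that unfolding misses_def by auto
  define \<U> where "\<U> = {V. openin X V \<and> (\<exists>a<c. misses V a)}"
  have "K \<subseteq> \<Union>\<U>"
  proof
    fix y assume "y \<in> K"
    with K(2) have "y \<in> arc_image"
      by blast
    then obtain V a where V: "openin X V" "y \<in> V" "a < c" "V \<inter> e ` {a..<c} = {}"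
      by (rule arc_image_point_misses_left_of[OF _ \<open>0 < c\<close> \<open>c \<le> 1\<close>])
    then have "V \<in> \<U>"
      unfolding \<U>_def misses_def by (intro CollectI conjI exI[of _ a])
    with V(2) show "y \<in> \<Union>\<U>"
      by (rule UnionI[rotated])
  qed
  moreover have "\<forall>U\<in>\<U>. openin X U"
    unfolding \<U>_def by blast
  moreover have "(\<forall>U\<in>\<U>. openin X U) \<and> K \<subseteq> \<Union>\<U> \<longrightarrow> (\<exists>\<F>. finite \<F> \<and> \<F> \<subseteq> \<U> \<and> K \<subseteq> \<Union>\<F>)"
    using K(1) unfolding compactin_def by blast
  ultimately obtain \<F> where "finite \<F>" "\<F> \<subseteq> \<U>" "K \<subseteq> \<Union>\<F>"
    by blast
  have "\<exists>a<c. \<forall>V\<in>\<F>. misses V a"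
  proof (rule finite_common_witness_below[OF \<open>finite \<F>\<close> _ misses_mono])
    show "\<exists>a<c. misses V a" if "V \<in> \<F>" for V
      using that \<open>\<F> \<subseteq> \<U>\<close> unfolding \<U>_def by blast
  qed
  then obtain a where "a < c" and a: "\<And>V. V \<in> \<F> \<Longrightarrow> misses V a"
    by blast
  have "K \<inter> e ` {a..<c} = {}"
  proof (rule equals0I)
    fix y assume y: "y \<in> K \<inter> e ` {a..<c}"
    with \<open>K \<subseteq> \<Union>\<F>\<close> obtain V where "V \<in> \<F>" "y \<in> V"
      by blast
    with y have "y \<in> V \<inter> e ` {a..<c}"
      by simp
    with a[OF \<open>V \<in> \<F>\<close>] show False
      unfolding misses_def by simp
  qed
  with \<open>a < c\<close> show ?thesis
    by (rule that)
qed

text \<open>Compactness forbids a neighbourhood of a point of the arc from meeting its closure only in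
  points of the arc: a closed neighbourhood would be a compact subset of the arc, yet contain
  e[r,c).\<close>

lemma gap_points_dense:
  assumes "openin X U" "r \<in> {0..<1}" "e r \<in> U"
  shows "\<not> U \<inter> arc_closure \<subseteq> arc_image"
proof
  assume no_gap: "U \<inter> arc_closure \<subseteq> arc_image"
  have "regular_space X"
    using compact Hausdorff by (rule compact_Hausdorff_imp_regular_space)
  then have "neighbourhood_base_of (closedin X) X"
    by (simp add: neighbourhood_base_of_closedin)
  from this[unfolded neighbourhood_base_of, rule_format, OF conjI[OF assms(1,3)]]
  obtain N C where N: "openin X N" "closedin X C" "e r \<in> N" "N \<subseteq> C" "C \<subseteq> U"
    by blast
  obtain d where "d > 0" and d: "\<And>x. x \<in> {0..<1} \<Longrightarrow> r \<le> x \<Longrightarrow> x < r + d \<Longrightarrow> e x \<in> N"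
    using continuous_map_sorgenfrey_right[OF e_continuous assms(2) N(1,3)] by blast
  define c where "c = min (r + d) 1"
  have "r < c" "c \<le> 1"
    using \<open>d > 0\<close> assms(2) unfolding c_def by auto
  define K where "K = C \<inter> arc_closure"
  have "compactin X K"
    unfolding K_def using compact N(2) closedin_arc_closure
    by (intro closedin_compact_space) (auto intro: closedin_Int)
  moreover have "K \<subseteq> arc_image"
    using no_gap N(5) unfolding K_def by blast
  moreover have "0 < c"
    using \<open>r < c\<close> assms(2) by simp
  ultimately obtain a where "a < c" and a: "K \<inter> e ` {a..<c} = {}"
    using compact_subset_arc_image_misses_left_of \<open>c \<le> 1\<close> by blast
  define x where "x = (max a r + c) / 2"
  have "x \<in> {0..<1}" "r \<le> x" "x < r + d" "x \<in> {a..<c}"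
    using \<open>a < c\<close> \<open>r < c\<close> \<open>c \<le> 1\<close> assms(2) unfolding x_def c_def by auto
  then have "e x \<in> K"
    using d N(4) arc_image_subset_arc_closure unfolding K_def arc_image_def by blast
  with a \<open>x \<in> {a..<c}\<close> show False
    by blast
qed

lemma arc_type_right_dense_imp_arc_image:
  assumes dense: "right_dense_in {t. \<exists>r. arc_type n t r} arc_preimage a b"
    and "b - a < 1 / real n" and u: "u \<in> arc_preimage" "a < u" "u < b"
  shows "f u \<in> arc_image"
proof (rule ccontr)
  assume "f u \<notin> arc_image"
  have D: "\<exists>p r. arc_type n p r \<and> u < p \<and> p < u + \<eta> \<and> p < b" if "0 < \<eta>" for \<eta>
    using right_dense_inD[OF dense u that] by blast
  define Rs where "Rs = {r. \<exists>t. arc_type n t r \<and> u < t \<and> t < b}"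
  obtain p0 r0 where "arc_type n p0 r0" "u < p0" "p0 < b"
    using D[of 1] by auto
  then have "r0 \<in> Rs" "r0 < 1"
    by (auto simp: Rs_def arc_type_def)
  have "0 \<le> r" if "r \<in> Rs" for r
    using that by (auto simp: Rs_def arc_type_def)
  then have bdd: "bdd_below Rs"
    by (intro bdd_below.I[of _ 0])
  define R where "R = Inf Rs"
  have "R \<in> {0..<1}"
    using cInf_greatest[of Rs 0] cInf_lower[OF \<open>r0 \<in> Rs\<close> bdd] \<open>r0 \<in> Rs\<close> \<open>r0 < 1\<close>
      \<open>\<And>r. r \<in> Rs \<Longrightarrow> 0 \<le> r\<close> unfolding R_def by fastforce
  then have "f u \<noteq> e R"
    using \<open>f u \<notin> arc_image\<close> by (auto simp: arc_image_def)
  then obtain U V where UV: "openin X U" "openin X V" "f u \<in> U" "e R \<in> V" "U \<inter> V = {}"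
    using separate_points[OF f_in_topspace e_in_topspace[OF \<open>R \<in> {0..<1}\<close>]] by blast
  obtain d1 where "d1 > 0" and d1: "\<And>x. x \<in> {0..<1} \<Longrightarrow> R \<le> x \<Longrightarrow> x < R + d1 \<Longrightarrow> e x \<in> V"
    using continuous_map_sorgenfrey_right[OF e_continuous \<open>R \<in> {0..<1}\<close> UV(2,4)] by blast
  obtain d2 where "d2 > 0" and d2: "\<And>x. u \<le> x \<Longrightarrow> x < u + d2 \<Longrightarrow> f x \<in> U"
    using continuous_map_sorgenfrey_right_UNIV[OF f_continuous UV(1,3)] by blast
  obtain r1 where "r1 \<in> Rs" "r1 < R + d1"
    using cInf_lessD[of Rs "R + d1"] \<open>r0 \<in> Rs\<close> \<open>d1 > 0\<close> unfolding R_def by auto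
  then obtain t1 where t1: "arc_type n t1 r1" "u < t1" "t1 < b"
    by (auto simp: Rs_def)
  obtain p r where p: "arc_type n p r" "u < p" "p < u + min d2 (t1 - u)" "p < b"
    using D[of "min d2 (t1 - u)"] \<open>d2 > 0\<close> t1(2) by auto
  have "t1 < p + 1 / real n"
    using \<open>b - a < 1 / real n\<close> u(2) p(2) t1(3) by linarith
  then have "r \<le> r1"
    using arc_type_mono[OF p(1) t1(1)] p(3) by linarith
  moreover have "R \<le> r"
    unfolding R_def using p bdd by (intro cInf_lower) (auto simp: Rs_def)
  ultimately have "f p \<in> V"
    using d1[of r] p(1) \<open>r1 < R + d1\<close> by (auto simp: arc_type_def)
  moreover have "f p \<in> U"
    using d2 p(2,3) by simp
  ultimately show False
    using UV(5) by blast
qed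

lemma arc_type_not_right_dense:
  assumes "b - a < 1 / real n" "z \<in> arc_preimage" "a < z" "z < b"
  shows "\<not> right_dense_in {t. \<exists>r. arc_type n t r} arc_preimage a b"
proof
  assume dense: "right_dense_in {t. \<exists>r. arc_type n t r} arc_preimage a b"
  define W where "W = f ` {a<..<b}"
  have "openin X W"
    unfolding W_def by (rule openin_f_image[OF openin_sorgenfrey_greaterThanLessThan])
  have "W \<inter> arc_closure \<subseteq> arc_image"
  proof
    fix y assume "y \<in> W \<inter> arc_closure"
    then obtain u where "a < u" "u < b" "y = f u" "u \<in> arc_preimage"
      by (auto simp: W_def arc_preimage_def)
    with dense \<open>b - a < 1 / real n\<close> show "y \<in> arc_image"
      using arc_type_right_dense_imp_arc_image by blast
  qed
  moreover have "f z \<in> arc_image"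
    using arc_type_right_dense_imp_arc_image[OF dense assms] .
  then obtain r where "r \<in> {0..<1}" "f z = e r"
    by (auto simp: arc_image_def)
  moreover have "f z \<in> W"
    using assms(3,4) by (simp add: W_def)
  ultimately show False
    using gap_points_dense[OF \<open>openin X W\<close>] by auto
qed

lemma gap_type_right_dense_level:
  assumes dense: "right_dense_in {t. \<exists>l. gap_type n k t l} arc_preimage a b"
    and "b - a < 1 / real n" and t: "t \<in> arc_preimage" "a < t"
    and u0: "gap_type n k u0 l0" "t < u0" "u0 < b" and "s < l0"
  shows "f t \<in> arc_segment s 1"
proof (rule ccontr)
  assume "f t \<notin> arc_segment s 1"
  then obtain d where "d > 0" and d: "\<And>x. t \<le> x \<Longrightarrow> x < t + d \<Longrightarrow> f x \<notin> arc_segment s 1"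
    using f_avoids_closed[OF closedin_arc_segment] by blast
  have "0 < min d (u0 - t)"
    using \<open>d > 0\<close> u0(2) by simp
  moreover have "t < b"
    using u0(2,3) by simp
  ultimately obtain u l where u: "gap_type n k u l" "t < u" "u < t + min d (u0 - t)"
    using right_dense_inD[OF dense t] by blast
  have "u0 < u + 1 / real n"
    using \<open>b - a < 1 / real n\<close> t(2) u(2) u0(3) by linarith
  then have "l0 \<le> l"
    using gap_type_antimono[OF u(1) u0(1)] u(3) by linarith
  have "l \<le> 1" "f u \<in> arc_segment 0 l" "f u \<notin> arc_segment 0 s"
    using u(1) \<open>s < l0\<close> \<open>l0 \<le> l\<close> by (auto simp: gap_type_def gap_level_def)
  then have "f u \<in> arc_segment s l"
    using arc_segment_split[of 0 l s] by blast
  also have "\<dots> \<subseteq> arc_segment s 1"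
    using \<open>l \<le> 1\<close> by (rule arc_segment_mono[OF order_refl])
  finally show False
    using d u(2,3) by simp
qed

lemma gap_type_not_right_dense:
  assumes "b - a < 1 / real n" "z \<in> arc_preimage" "a < z" "z < b"
  shows "\<not> right_dense_in {t. \<exists>l. gap_type n k t l} arc_preimage a b"
proof
  assume dense: "right_dense_in {t. \<exists>l. gap_type n k t l} arc_preimage a b"
  obtain t where t: "a < t" "t < b" "f t \<in> arc_image"
    using arc_image_meets_image_of_interval assms(2-4) by blast
  then obtain r where r: "r \<in> {0..<1}" "f t = e r"
    by (auto simp: arc_image_def)
  have "t \<in> arc_preimage"
    using t(3) arc_image_subset_arc_closure by (auto simp: arc_preimage_def)
  have "f t \<notin> arc_segment 0 r"
    using r e_notin_arc_segment_left by simp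
  then obtain \<delta> where "\<delta> > 0" and \<delta>: "\<And>x. t \<le> x \<Longrightarrow> x < t + \<delta> \<Longrightarrow> f x \<notin> arc_segment 0 r"
    using f_avoids_closed[OF closedin_arc_segment] by blast
  then obtain u0 l0 where u0: "gap_type n k u0 l0" "t < u0" "u0 < t + \<delta>" "u0 < b"
    using right_dense_inD[OF dense \<open>t \<in> arc_preimage\<close> t(1,2)] by blast
  have "r < l0"
  proof (rule ccontr)
    assume "\<not> r < l0"
    then have "arc_segment 0 l0 \<subseteq> arc_segment 0 r"
      by (intro arc_segment_mono) auto
    moreover have "f u0 \<in> arc_segment 0 l0"
      using u0(1) by (simp add: gap_type_def gap_level_def)
    ultimately show False
      using \<delta> u0(2,3) by auto
  qed
  then have "f t \<in> arc_segment ((r + l0) / 2) 1"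
    by (intro gap_type_right_dense_level[OF dense assms(1) \<open>t \<in> arc_preimage\<close> t(1) u0(1,2,4)]) simp
  moreover have "e r \<notin> arc_segment ((r + l0) / 2) 1"
    using r(1) \<open>r < l0\<close> by (intro e_notin_arc_segment_right) auto
  ultimately show False
    using r(2) by simp
qed

lemma arc_preimage_nonempty: "arc_preimage \<noteq> {}"
proof -
  have "e 0 \<in> topspace X"
    by (simp add: e_in_topspace)
  then obtain t where "f t = e 0"
    using f_surj by (metis imageE)
  moreover have "e 0 \<in> arc_closure"
    using arc_image_subset_arc_closure by (auto simp: arc_image_def)
  ultimately show ?thesis
    by (auto simp: arc_preimage_def)
qed

lemma countable_closure_arc_preimage_diff: "countable (closure arc_preimage - arc_preimage)"
proof (rule countable_subset[OF _ countable_right_gaps])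
  show "closure arc_preimage - arc_preimage
    \<subseteq> {x \<in> closure arc_preimage. \<exists>d>0. {x..<x + d} \<inter> arc_preimage = {}}"
  proof
    fix x assume x: "x \<in> closure arc_preimage - arc_preimage"
    then have "f x \<notin> arc_closure"
      by (simp add: arc_preimage_def)
    then obtain d where "d > 0" "\<And>y. x \<le> y \<Longrightarrow> y < x + d \<Longrightarrow> f y \<notin> arc_closure"
      using f_avoids_closed[OF closedin_arc_closure] by blast
    then have "d > 0" "{x..<x + d} \<inter> arc_preimage = {}"
      by (auto simp: arc_preimage_def)
    with x show "x \<in> {x \<in> closure arc_preimage. \<exists>d>0. {x..<x + d} \<inter> arc_preimage = {}}"
      by blast
  qed
qed

definition type_cover :: "real set set" where
  "type_cover = range (\<lambda>n. {t. \<exists>r. arc_type n t r}) \<union>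
     range (\<lambda>(n, k). {t. \<exists>l. gap_type n k t l}) \<union> (\<lambda>x. {x}) ` (closure arc_preimage - arc_preimage)"

lemma countable_type_cover: "countable type_cover"
  unfolding type_cover_def
  by (intro countable_Un countable_image countable_closure_arc_preimage_diff) auto

lemma closure_arc_preimage_subset_type_cover: "closure arc_preimage \<subseteq> \<Union>type_cover"
proof
  fix x assume "x \<in> closure arc_preimage"
  show "x \<in> \<Union>type_cover"
  proof (cases "x \<in> arc_preimage")
    case True
    then consider n r where "arc_type n x r" | n k l where "gap_type n k x l"
      using arc_preimage_cases by blast
    then show ?thesis
    proof cases
      case (1 n r)
      then have "x \<in> {t. \<exists>r. arc_type n t r}"
        by blast
      moreover have "{t. \<exists>r. arc_type n t r} \<in> type_cover"
        unfolding type_cover_def by (rule UnI1, rule UnI1, rule rangeI)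
      ultimately show ?thesis
        by (rule UnionI[rotated])
    next
      case (2 n k l)
      then have "x \<in> {t. \<exists>l. gap_type n k t l}"
        by blast
      moreover have "{t. \<exists>l. gap_type n k t l} \<in> type_cover"
        unfolding type_cover_def by (rule UnI1, rule UnI2, rule range_eqI[of _ _ "(n, k)"]) simp
      ultimately show ?thesis
        by (rule UnionI[rotated])
    qed
  next
    case False
    with \<open>x \<in> closure arc_preimage\<close> have "{x} \<in> type_cover"
      unfolding type_cover_def by (intro UnI2 imageI) simp
    then show ?thesis
      by (rule UnionI) simp
  qed
qed

theorem inconsistent: False
proof -
  let ?Z = arc_preimage
  have "closure ?Z \<noteq> {}"
    using arc_preimage_nonempty by simp
  then obtain A w \<epsilon> where A: "A \<in> type_cover" "w \<in> closure ?Z" "\<epsilon> > 0"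
    and dense: "closure ?Z \<inter> ball w \<epsilon> \<subseteq> closure A"
    by (rule Baire_countable_cover[OF closed_closure _ countable_type_cover
          closure_arc_preimage_subset_type_cover])
  have small: "\<exists>a b z. z \<in> ?Z \<and> a < z \<and> z < b \<and> b - a < 1 / real n \<and> right_dense_in A ?Z a b"
    if "0 < n" for n
    using right_dense_in_small_interval[OF arc_preimage_no_right_isolated A(2,3) dense] that
    by (metis of_nat_0_less_iff zero_less_divide_1_iff)
  from A(1) consider n where "A = {t. \<exists>r. arc_type n t r}" | n k where "A = {t. \<exists>l. gap_type n k t l}"
    | x where "x \<in> closure ?Z - ?Z" "A = {x}"
    unfolding type_cover_def by auto
  then show False
  proof cases
    case (1 n)
    moreover have "A \<noteq> {}"
      using A(2,3) dense by auto
    ultimately have "0 < n"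
      by (auto simp: arc_type_def)
    with 1 show False
      using small arc_type_not_right_dense by blast
  next
    case (2 n k)
    moreover have "A \<noteq> {}"
      using A(2,3) dense by auto
    ultimately have "0 < n"
      by (auto simp: gap_type_def)
    with 2 show False
      using small gap_type_not_right_dense by blast
  next
    case (3 x)
    obtain z where z: "z \<in> ?Z" "dist z w < \<epsilon>"
      using A(2,3) unfolding closure_approachable by blast
    then have "z \<in> closure ?Z \<inter> ball w \<epsilon>"
      using closure_subset by (auto simp: dist_commute)
    with dense 3(2) have "z = x"
      by auto
    with z(1) 3(1) show False
      by simp
  qed
qed

end

theorem not_continuous_open_image_if_sorgenfrey_arc:
  assumes "compact_space X" "Hausdorff_space X" "sorgenfrey_arc X e"
  shows "\<not> continuous_open_image sorgenfrey X"
proof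
  assume "continuous_open_image sorgenfrey X"
  then obtain f where "continuous_map sorgenfrey X f" "open_map sorgenfrey X f" "range f = topspace X"
    unfolding continuous_open_image_def by auto
  with assms interpret sorgenfrey_open_image X f e
    by unfold_locales
  show False
    by (rule inconsistent)
qed

lemma embedding_map_neighbourhood:
  assumes "embedding_map S X e" "openin S U" "x \<in> U"
  obtains V where "openin X V" "e x \<in> V" "\<And>y. y \<in> topspace S \<Longrightarrow> e y \<in> V \<Longrightarrow> y \<in> U"
proof -
  have H: "homeomorphic_map S (subtopology X (e ` topspace S)) e"
    using assms(1) by (simp add: embedding_map_def)
  then have "openin (subtopology X (e ` topspace S)) (e ` U)"
    using assms(2) homeomorphic_imp_open_map by (auto simp: open_map_def)
  then obtain V where V: "openin X V" "e ` U = V \<inter> e ` topspace S"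
    by (auto simp: openin_subtopology)
  have "inj_on e (topspace S)"
    using H by (rule homeomorphic_imp_injective_map)
  moreover have "U \<subseteq> topspace S"
    using assms(2) by (rule openin_subset)
  ultimately have "y \<in> U" if "y \<in> topspace S" "e y \<in> V" for y
  proof -
    from that V(2) obtain u where "u \<in> U" "e y = e u"
      by (metis IntI image_eqI imageE)
    with that(1) \<open>U \<subseteq> topspace S\<close> \<open>inj_on e (topspace S)\<close> show "y \<in> U"
      by (metis inj_onD subsetD)
  qed
  moreover have "e x \<in> V"
    using V(2) assms(3) by blast
  ultimately show ?thesis
    using V(1) that by blast
qed

lemma sorgenfrey_arc_if_embedding:
  assumes emb: "embedding_map sorgenfrey X e"
  shows "sorgenfrey_arc X e"
  unfolding sorgenfrey_arc_def
proof (intro conjI ballI allI impI)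
  show "continuous_map (subtopology sorgenfrey {0..<1}) X e"
    using emb homeomorphic_imp_continuous_map continuous_map_in_subtopology
    by (metis continuous_map_from_subtopology embedding_map_def)
next
  fix r :: real
  obtain V where "openin X V" "e r \<in> V" "\<And>y. e y \<in> V \<Longrightarrow> r \<le> y"
    using embedding_map_neighbourhood[OF emb openin_sorgenfrey_atLeast, of r] by auto
  then show "e r \<notin> X closure_of e ` {0..<r}"
    by (intro notin_closure_ofI) force+
next
  fix r s :: real assume "r < s"
  then obtain V where "openin X V" "e r \<in> V" "\<And>y. e y \<in> V \<Longrightarrow> y < s"
    using embedding_map_neighbourhood[OF emb openin_sorgenfrey_lessThan, of r s] by auto
  then show "e r \<notin> X closure_of e ` {s..<1}"
    by (intro notin_closure_ofI) force+
qed

section \<open>The double arrow\<close>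

lemma mem_double_arrow_set:
  "p \<in> double_arrow_set \<longleftrightarrow> (snd p = 0 \<and> 0 < fst p \<and> fst p \<le> 1) \<or> (snd p = 1 \<and> 0 \<le> fst p \<and> fst p < 1)"
  by (cases p) (auto simp: double_arrow_set_def)

lemma lex_less_trans: "lex_less p q \<Longrightarrow> lex_less q r \<Longrightarrow> lex_less p r"
  by (auto simp: lex_less_def)

lemma lex_less_linear: "p \<noteq> q \<Longrightarrow> lex_less p q \<or> lex_less q p"
  by (cases p, cases q) (auto simp: lex_less_def)

lemma lex_less_asym: "lex_less p q \<Longrightarrow> \<not> lex_less q p"
  by (auto simp: lex_less_def)

definition double_arrow_subbasis :: "(real \<times> nat) set set" where
  "double_arrow_subbasis = {double_arrow_set}
     \<union> {{p \<in> double_arrow_set. lex_less p a} | a. a \<in> double_arrow_set}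
     \<union> {{p \<in> double_arrow_set. lex_less a p} | a. a \<in> double_arrow_set}"

lemma double_arrow_subbasis_cases:
  assumes "S \<in> double_arrow_subbasis"
  obtains "S = double_arrow_set"
    | a where "a \<in> double_arrow_set" "S = {p \<in> double_arrow_set. lex_less p a}"
    | a where "a \<in> double_arrow_set" "S = {p \<in> double_arrow_set. lex_less a p}"
  using assms unfolding double_arrow_subbasis_def by blast

lemma double_arrow_eq: "double_arrow = topology_generated_by double_arrow_subbasis"
  by (simp add: double_arrow_def double_arrow_subbasis_def)

lemma double_arrow_subbasis_subset: "S \<in> double_arrow_subbasis \<Longrightarrow> S \<subseteq> double_arrow_set"
  by (auto simp: double_arrow_subbasis_def)

lemma topspace_double_arrow: "topspace double_arrow = double_arrow_set"
  unfolding double_arrow_eq topology_generated_by_topspace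
  using double_arrow_subbasis_subset by (auto simp: double_arrow_subbasis_def)

lemma openin_double_arrow_below:
  "a \<in> double_arrow_set \<Longrightarrow> openin double_arrow {p \<in> double_arrow_set. lex_less p a}"
  unfolding double_arrow_eq by (rule topology_generated_by_Basis) (unfold double_arrow_subbasis_def, blast)

lemma openin_double_arrow_above:
  "a \<in> double_arrow_set \<Longrightarrow> openin double_arrow {p \<in> double_arrow_set. lex_less a p}"
  unfolding double_arrow_eq by (rule topology_generated_by_Basis) (unfold double_arrow_subbasis_def, blast)

lemma Hausdorff_space_double_arrow: "Hausdorff_space double_arrow"
proof -
  have sep: "\<exists>U V. openin double_arrow U \<and> openin double_arrow V \<and> p \<in> U \<and> q \<in> V \<and> disjnt U V"
    if pq: "p \<in> double_arrow_set" "q \<in> double_arrow_set" "lex_less p q" for p q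
  proof (cases "\<exists>c\<in>double_arrow_set. lex_less p c \<and> lex_less c q")
    case True
    then obtain c where c: "c \<in> double_arrow_set" "lex_less p c" "lex_less c q"
      by blast
    have "disjnt {w \<in> double_arrow_set. lex_less w c} {w \<in> double_arrow_set. lex_less c w}"
      using lex_less_asym unfolding disjnt_def by blast
    then show ?thesis
      using openin_double_arrow_below[OF c(1)] openin_double_arrow_above[OF c(1)] c pq by blast
  next
    case False
    have "disjnt {w \<in> double_arrow_set. lex_less w q} {w \<in> double_arrow_set. lex_less p w}"
      using False unfolding disjnt_def by blast
    then show ?thesis
      using openin_double_arrow_below[OF pq(2)] openin_double_arrow_above[OF pq(1)] pq by blast
  qed
  show ?thesis
    unfolding Hausdorff_space_def topspace_double_arrow
  proof (intro allI impI)
    fix x y assume xy: "x \<in> double_arrow_set \<and> y \<in> double_arrow_set \<and> x \<noteq> y"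
    then consider "lex_less x y" | "lex_less y x"
      using lex_less_linear by blast
    then show "\<exists>U V. openin double_arrow U \<and> openin double_arrow V \<and> x \<in> U \<and> y \<in> V \<and> disjnt U V"
    proof cases
      case 1
      then show ?thesis
        using sep xy by blast
    next
      case 2
      then obtain U V where "openin double_arrow U" "openin double_arrow V" "y \<in> U" "x \<in> V" "disjnt U V"
        using sep xy by blast
      then show ?thesis
        by (metis disjnt_sym)
    qed
  qed
qed

lemma double_arrow_union_of_intersections:
  "double_arrow = topology (arbitrary union_of
     (finite intersection_of (\<lambda>x. x \<in> double_arrow_subbasis) relative_to double_arrow_set))"
proof -
  let ?B = "\<lambda>x. x \<in> double_arrow_subbasis"
  have "(finite' intersection_of ?B) A \<longleftrightarrow> (finite intersection_of ?B relative_to double_arrow_set) A"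
    for A
  proof
    assume "(finite' intersection_of ?B) A"
    then obtain U where U: "finite U" "U \<noteq> {}" "U \<subseteq> double_arrow_subbasis" "\<Inter>U = A"
      by (auto simp: intersection_of_def)
    then have "double_arrow_set \<inter> \<Inter>U = \<Inter>U"
      using double_arrow_subbasis_subset by blast
    then show "(finite intersection_of ?B relative_to double_arrow_set) A"
      unfolding relative_to_def intersection_of_def using U by auto
  next
    assume "(finite intersection_of ?B relative_to double_arrow_set) A"
    then obtain U where U: "finite U" "U \<subseteq> double_arrow_subbasis" "double_arrow_set \<inter> \<Inter>U = A"
      unfolding relative_to_def intersection_of_def by auto
    have "double_arrow_set \<in> double_arrow_subbasis"
      by (simp add: double_arrow_subbasis_def)
    then show "(finite' intersection_of ?B) A"
      unfolding intersection_of_def using U by (intro exI[of _ "insert double_arrow_set U"]) auto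
  qed
  then have "finite' intersection_of ?B = finite intersection_of ?B relative_to double_arrow_set"
    by (intro ext) simp
  then show ?thesis
    unfolding double_arrow_eq generate_topology_on_eq by simp
qed

definition double_arrow_Sup :: "(real \<times> nat) set \<Rightarrow> real \<times> nat" where
  "double_arrow_Sup A = (if (Sup (fst ` A), 1) \<in> A then (Sup (fst ` A), 1) else (Sup (fst ` A), 0))"

lemma double_arrow_set_bounds: "p \<in> double_arrow_set \<Longrightarrow> 0 \<le> fst p \<and> fst p \<le> 1 \<and> snd p \<le> 1"
  by (auto simp: mem_double_arrow_set)

lemma bdd_above_fst_double_arrow: "A \<subseteq> double_arrow_set \<Longrightarrow> bdd_above (fst ` A)"
  using double_arrow_set_bounds by (meson bdd_aboveI2 subsetD)

lemma fst_le_Sup_fst_double_arrow: "A \<subseteq> double_arrow_set \<Longrightarrow> a \<in> A \<Longrightarrow> fst a \<le> Sup (fst ` A)"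
  by (intro cSup_upper bdd_above_fst_double_arrow) auto

lemma fst_double_arrow_Sup [simp]: "fst (double_arrow_Sup A) = Sup (fst ` A)"
  by (simp add: double_arrow_Sup_def)

lemma double_arrow_Sup_in:
  assumes A: "A \<subseteq> double_arrow_set" "A \<noteq> {}"
  shows "double_arrow_Sup A \<in> double_arrow_set"
proof (cases "(Sup (fst ` A), 1) \<in> A")
  case True
  then show ?thesis
    using A(1) by (auto simp: double_arrow_Sup_def)
next
  case False
  let ?s = "Sup (fst ` A)"
  have "?s \<le> 1"
    using A double_arrow_set_bounds by (intro cSup_least) auto
  moreover have "0 < ?s"
  proof (rule ccontr)
    assume "\<not> 0 < ?s"
    obtain a where "a \<in> A"
      using A(2) by blast
    with A(1) have "a \<in> double_arrow_set" "fst a \<le> ?s"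
      using fst_le_Sup_fst_double_arrow by auto
    with \<open>\<not> 0 < ?s\<close> have "a = (0, 1)" "?s = 0"
      by (cases a; auto simp: mem_double_arrow_set)+
    with False \<open>a \<in> A\<close> show False
      by simp
  qed
  ultimately show ?thesis
    using False by (simp add: double_arrow_Sup_def mem_double_arrow_set)
qed

lemma not_lex_less_double_arrow_Sup:
  assumes "A \<subseteq> double_arrow_set" "a \<in> A"
  shows "\<not> lex_less (double_arrow_Sup A) a"
proof
  assume "lex_less (double_arrow_Sup A) a"
  then have "fst a = Sup (fst ` A)" "snd (double_arrow_Sup A) < snd a"
    using fst_le_Sup_fst_double_arrow[OF assms] by (auto simp: lex_less_def)
  moreover have "snd a \<le> 1"
    using assms double_arrow_set_bounds by blast
  ultimately have "a = (Sup (fst ` A), 1)" "(Sup (fst ` A), 1) \<notin> A"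
    by (cases a; auto simp: double_arrow_Sup_def split: if_splits)+
  with assms(2) show False
    by simp
qed

lemma lex_less_double_arrow_Sup_imp:
  assumes "A \<subseteq> double_arrow_set" "A \<noteq> {}" "lex_less b (double_arrow_Sup A)"
  shows "\<exists>a\<in>A. lex_less b a"
proof (cases "fst b < Sup (fst ` A)")
  case True
  then obtain a where "a \<in> A" "fst b < fst a"
    using less_cSup_iff[of "fst ` A" "fst b"] bdd_above_fst_double_arrow assms(1,2) by auto
  then show ?thesis
    by (auto simp: lex_less_def)
next
  case False
  with assms(3) have "fst b = Sup (fst ` A)" "snd b < snd (double_arrow_Sup A)"
    unfolding lex_less_def by auto
  then have "(Sup (fst ` A), 1) \<in> A" "snd b < 1"
    by (auto simp: double_arrow_Sup_def split: if_splits)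
  with \<open>fst b = Sup (fst ` A)\<close> show ?thesis
    by (intro bexI[of _ "(Sup (fst ` A), 1)"]) (auto simp: lex_less_def)
qed

lemma compact_space_double_arrow: "compact_space double_arrow"
proof (rule Alexander_subbase_alt[OF _ _ double_arrow_union_of_intersections[symmetric]])
  show "double_arrow_set \<subseteq> \<Union>double_arrow_subbasis"
    by (auto simp: double_arrow_subbasis_def)
next
  fix C assume C: "C \<subseteq> double_arrow_subbasis" "double_arrow_set \<subseteq> \<Union>C"
  let ?D = double_arrow_set
  define L where "L a = {p \<in> ?D. lex_less p a}" for a
  define R where "R b = {p \<in> ?D. lex_less b p}" for b
  show "\<exists>C'. finite C' \<and> C' \<subseteq> C \<and> ?D \<subseteq> \<Union>C'"
  proof (cases "?D \<in> C")
    case True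
    then show ?thesis
      by (intro exI[of _ "{?D}"]) auto
  next
    case False
    have C_ray: "\<exists>a\<in>?D. S = L a \<or> S = R a" if "S \<in> C" for S
    proof -
      from C(1) that have "S \<in> double_arrow_subbasis"
        by blast
      then show ?thesis
      proof (cases rule: double_arrow_subbasis_cases)
        case 1
        with that False show ?thesis
          by simp
      qed (auto simp: L_def R_def)
    qed
    define A where "A = {a \<in> ?D. L a \<in> C}"
    txt \<open>The least point \<langle>0,1\<rangle> lies in no ray R b, so it is covered by some L a.\<close>
    have "(0, 1) \<in> ?D"
      by (simp add: mem_double_arrow_set)
    then obtain S where S: "S \<in> C" "(0, 1) \<in> S"
      using C(2) by blast
    then obtain a where a: "a \<in> ?D" "S = L a \<or> S = R a"
      using C_ray by blast
    moreover have "\<not> lex_less a (0, 1)"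
      using a(1) by (cases a) (auto simp: mem_double_arrow_set lex_less_def)
    ultimately have "S = L a"
      using S(2) unfolding R_def by auto
    with a(1) S(1) have "a \<in> A"
      unfolding A_def by simp
    define \<alpha> where "\<alpha> = double_arrow_Sup A"
    have "A \<subseteq> ?D" "A \<noteq> {}"
      using \<open>a \<in> A\<close> unfolding A_def by blast+
    then have \<alpha>: "\<alpha> \<in> ?D" "\<And>a. a \<in> A \<Longrightarrow> \<not> lex_less \<alpha> a"
      "\<And>b. lex_less b \<alpha> \<Longrightarrow> \<exists>a\<in>A. lex_less b a"
      unfolding \<alpha>_def
      by (simp_all add: double_arrow_Sup_in not_lex_less_double_arrow_Sup lex_less_double_arrow_Sup_imp)
    then obtain S' where "S' \<in> C" "\<alpha> \<in> S'"
      using C(2) by blast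
    then obtain c where c: "c \<in> ?D" "S' = L c \<or> S' = R c"
      using C_ray by blast
    have "S' \<noteq> L c"
    proof
      assume "S' = L c"
      with \<open>S' \<in> C\<close> c(1) have "c \<in> A"
        by (simp add: A_def)
      moreover from \<open>S' = L c\<close> \<open>\<alpha> \<in> S'\<close> have "lex_less \<alpha> c"
        by (simp add: L_def)
      ultimately show False
        using \<alpha>(2) by blast
    qed
    with c(2) have "S' = R c"
      by blast
    with \<open>\<alpha> \<in> S'\<close> have "lex_less c \<alpha>"
      by (simp add: R_def)
    then obtain a where "a \<in> A" "lex_less c a"
      using \<alpha>(3) by blast
    have "?D \<subseteq> L a \<union> R c"
    proof
      fix p assume "p \<in> ?D"
      have "lex_less p a \<or> lex_less c p"
        using lex_less_linear[of p a] lex_less_trans[OF \<open>lex_less c a\<close>, of p] \<open>lex_less c a\<close>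
        by blast
      with \<open>p \<in> ?D\<close> show "p \<in> L a \<union> R c"
        unfolding L_def R_def by blast
    qed
    moreover have "L a \<in> C"
      using \<open>a \<in> A\<close> by (simp add: A_def)
    ultimately show ?thesis
      using \<open>S' = R c\<close> \<open>S' \<in> C\<close> by (intro exI[of _ "{L a, R c}"]) auto
  qed
qed

lemma continuous_map_double_arrow_upper:
  "continuous_map (subtopology sorgenfrey {0..<1}) double_arrow (\<lambda>r. (r, 1))"
  unfolding double_arrow_eq
proof (rule continuous_on_generated_topo)
  let ?e = "\<lambda>r::real. (r, 1::nat)"
  fix U assume "U \<in> double_arrow_subbasis"
  then obtain T where "openin sorgenfrey T" "?e -` U \<inter> {0..<1} = T \<inter> {0..<1}"
  proof (cases rule: double_arrow_subbasis_cases)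
    case 1
    then have "?e -` U \<inter> {0..<1} = UNIV \<inter> {0..<1}"
      by (auto simp: mem_double_arrow_set)
    then show ?thesis
      using that by (metis openin_topspace topspace_sorgenfrey)
  next
    case (2 a)
    then have "?e -` U \<inter> {0..<1} = {..<fst a} \<inter> {0..<1}"
      by (cases a) (auto simp: mem_double_arrow_set lex_less_def)
    then show ?thesis
      using that openin_sorgenfrey_lessThan by blast
  next
    case (3 a)
    define T where "T = {r. fst a < r \<or> (r = fst a \<and> snd a = 0)}"
    have "openin sorgenfrey T"
      unfolding openin_sorgenfrey T_def by (intro ballI exI[of _ 1]) auto
    moreover have "?e -` U \<inter> {0..<1} = T \<inter> {0..<1}"
      using 3 by (cases a) (auto simp: T_def mem_double_arrow_set lex_less_def)
    ultimately show ?thesis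
      by (rule that)
  qed
  then show "openin (subtopology sorgenfrey {0..<1}) (?e -` U \<inter> topspace (subtopology sorgenfrey {0..<1}))"
    by (auto simp: openin_subtopology)
next
  show "(\<lambda>r. (r, 1::nat)) ` topspace (subtopology sorgenfrey {0..<1}) \<subseteq> \<Union>double_arrow_subbasis"
    by (auto simp: double_arrow_subbasis_def mem_double_arrow_set)
qed

lemma sorgenfrey_arc_double_arrow: "sorgenfrey_arc double_arrow (\<lambda>r. (r, 1))"
  unfolding sorgenfrey_arc_def
proof (intro conjI ballI allI impI)
  show "continuous_map (subtopology sorgenfrey {0..<1}) double_arrow (\<lambda>r. (r, 1))"
    by (rule continuous_map_double_arrow_upper)
next
  fix r :: real assume r: "r \<in> {0..<1}"
  show "(r, 1) \<notin> double_arrow closure_of (\<lambda>r. (r, 1::nat)) ` {0..<r}"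
  proof (cases "r = 0")
    case False
    with r have "(r, 0) \<in> double_arrow_set"
      by (simp add: mem_double_arrow_set)
    then show ?thesis
      by (rule notin_closure_ofI[OF openin_double_arrow_above])
        (use r in \<open>auto simp: mem_double_arrow_set lex_less_def\<close>)
  qed simp
next
  fix r s :: real assume r: "r \<in> {0..<1}" and "r < s"
  show "(r, 1) \<notin> double_arrow closure_of (\<lambda>r. (r, 1::nat)) ` {s..<1}"
  proof (cases "s < 1")
    case True
    with \<open>r < s\<close> r have "(s, 0) \<in> double_arrow_set"
      by (simp add: mem_double_arrow_set)
    then show ?thesis
      by (rule notin_closure_ofI[OF openin_double_arrow_below])
        (use r \<open>r < s\<close> in \<open>auto simp: mem_double_arrow_set lex_less_def\<close>)
  qed simp
qed

theorem mainTheorem17: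
  shows "(\<forall>X :: 'a topology.
            compact_space X \<and> Hausdorff_space X \<and> (\<exists>e. embedding_map sorgenfrey X e)
            \<longrightarrow> \<not> continuous_open_image sorgenfrey X)
         \<and> \<not> continuous_open_image sorgenfrey double_arrow"
proof (intro conjI allI impI)
  fix X :: "'a topology"
  assume "compact_space X \<and> Hausdorff_space X \<and> (\<exists>e. embedding_map sorgenfrey X e)"
  then obtain e where "compact_space X" "Hausdorff_space X" "embedding_map sorgenfrey X e"
    by blast
  then show "\<not> continuous_open_image sorgenfrey X"
    by (intro not_continuous_open_image_if_sorgenfrey_arc sorgenfrey_arc_if_embedding)
next
  show "\<not> continuous_open_image sorgenfrey double_arrow"
    by (rule not_continuous_open_image_if_sorgenfrey_arc[OF compact_space_double_arrow
          Hausdorff_space_double_arrow sorgenfrey_arc_double_arrow])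
qed

end
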